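(* Let $\mathcal{A}$ be a subring of the algebraic integers which is closed under complex conjugation. Let $\{\mathcal{W}_i\}_{i=1}^n$ be an equiisoclinic tight fusion frame consisting of $n$ subspaces of dimension $m$ of $\mathbb{F}^k$ ($\mathbb{F}=\mathbb{R}$ or $\mathbb{C}$). For each $i\in[n]$ fix an orthonormal basis of $\mathcal{W}_i$ and let $L_i$ be the $k\times m$ matrix with these basis vectors as columns. If for all $i\in[n]$ the entries of $\sqrt{k}L_i$ lie in $\mathcal{A}$, then \[ \frac{k(mn-k)}{n-1}\in\mathbb{Z}. \]
   Context: The algebraic integers are the complex roots of monic polynomials with integer coefficients. A collection of $m$-dimensional subspaces $\{\mathcal{W}_i\}_{i=1}^n$ of $\mathbb{F}^k$ with orthogonal projections $P_i=L_iL_i^*$ is a tight fusion frame if $\sum_iP_i=AI_k$ for some $A>0$. It is equiisoclinic if there is $\alpha>0$ with $L_i^*L_jL_j^*L_i=\alpha I_m$ for all $i\ne j$ (this does not depend on the choice of orthonormal bases). *)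

theory Defs
  imports "HOL-Computational_Algebra.Polynomial" Complex_Main
begin

text \<open>Matrices are represented as functions nat => nat => complex, with explicit
  dimension bounds. The family (L i) for i < n consists of k x m matrices.\<close>

definition conj_closed_alg_int_subring :: "complex set \<Rightarrow> bool" where
  "conj_closed_alg_int_subring R \<longleftrightarrow>
     R \<subseteq> {z. algebraic_int z} \<and> 1 \<in> R \<and>
     (\<forall>x\<in>R. \<forall>y\<in>R. x + y \<in> R \<and> x * y \<in> R) \<and> (\<forall>x\<in>R. - x \<in> R) \<and>
     (\<forall>x\<in>R. cnj x \<in> R)"

definition adj_mult :: "nat \<Rightarrow> (nat \<Rightarrow> nat \<Rightarrow> complex) \<Rightarrow> (nat \<Rightarrow> nat \<Rightarrow> complex) \<Rightarrow> nat \<Rightarrow> nat \<Rightarrow> complex" where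
  "adj_mult k L M a b = (\<Sum>r<k. cnj (L r a) * M r b)"

definition orthonormal_cols :: "nat \<Rightarrow> nat \<Rightarrow> (nat \<Rightarrow> nat \<Rightarrow> complex) \<Rightarrow> bool" where
  "orthonormal_cols k m L \<longleftrightarrow>
     (\<forall>a<m. \<forall>b<m. adj_mult k L L a b = (if a = b then 1 else 0))"

definition tight_fusion_frame :: "nat \<Rightarrow> nat \<Rightarrow> nat \<Rightarrow> (nat \<Rightarrow> nat \<Rightarrow> nat \<Rightarrow> complex) \<Rightarrow> bool" where
  "tight_fusion_frame n k m L \<longleftrightarrow>
     (\<exists>A::real. A > 0 \<and> (\<forall>r<k. \<forall>s<k.
        (\<Sum>i<n. \<Sum>c<m. L i r c * cnj (L i s c)) = (if r = s then complex_of_real A else 0)))"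

definition equiisoclinic :: "nat \<Rightarrow> nat \<Rightarrow> nat \<Rightarrow> (nat \<Rightarrow> nat \<Rightarrow> nat \<Rightarrow> complex) \<Rightarrow> bool" where
  "equiisoclinic n k m L \<longleftrightarrow>
     (\<exists>\<alpha>::real. \<alpha> > 0 \<and> (\<forall>i<n. \<forall>j<n. i \<noteq> j \<longrightarrow> (\<forall>a<m. \<forall>b<m.
        (\<Sum>c<m. adj_mult k (L i) (L j) a c * adj_mult k (L j) (L i) c b)
          = (if a = b then complex_of_real \<alpha> else 0))))"

end

theory Submission
  imports Defs
begin

text \<open>Write \<open>S = \<Sum>\<^sub>i L\<^sub>i L\<^sub>i\<^sup>* = A I\<close> and \<open>L\<^sub>i\<^sup>* L\<^sub>j L\<^sub>j\<^sup>* L\<^sub>i = \<alpha> I\<close> for \<open>i \<noteq> j\<close>.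
  Taking traces of \<open>S\<close> gives \<open>k A = n m\<close>, and the diagonal of \<open>L\<^sub>i\<^sup>* S L\<^sub>i = A I\<close> gives
  \<open>A = 1 + (n - 1) \<alpha>\<close>; together \<open>k\<^sup>2 \<alpha> = k (m n - k) / (n - 1)\<close>, a rational number.
  But \<open>k\<^sup>2 \<alpha>\<close> is a diagonal entry of \<open>M\<^sub>i\<^sup>* M\<^sub>j M\<^sub>j\<^sup>* M\<^sub>i\<close> with \<open>M\<^sub>i = \<surd>k L\<^sub>i\<close> having entries
  in \<open>\<A>\<close>, hence an algebraic integer, hence an integer.\<close>

lemma conj_closed_alg_int_subring_sum:
  assumes "conj_closed_alg_int_subring R" and "\<And>x. x \<in> S \<Longrightarrow> f x \<in> R"
  shows "sum f S \<in> R"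
proof (cases "finite S")
  case True
  have zero: "0 \<in> R"
  proof -
    have "1 \<in> R" "- 1 \<in> R" using assms(1) unfolding conj_closed_alg_int_subring_def by auto
    then have "1 + - 1 \<in> R" using assms(1) unfolding conj_closed_alg_int_subring_def by blast
    then show ?thesis by simp
  qed
  from True assms(2) show ?thesis
    by (induction S rule: finite_induct)
       (use zero assms(1) in \<open>auto simp: conj_closed_alg_int_subring_def\<close>)
next
  case False
  then show ?thesis using assms(1)
    by (metis add.right_inverse conj_closed_alg_int_subring_def sum.infinite)
qed

lemma sum_swap_outer_pair:
  "(\<Sum>x\<in>A. \<Sum>y\<in>B. \<Sum>u\<in>C. \<Sum>v\<in>D. f x y u v) = (\<Sum>u\<in>C. \<Sum>v\<in>D. \<Sum>x\<in>A. \<Sum>y\<in>B. f x y u v)"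
proof -
  have "(\<Sum>x\<in>A. \<Sum>y\<in>B. \<Sum>u\<in>C. \<Sum>v\<in>D. f x y u v) = (\<Sum>x\<in>A. \<Sum>u\<in>C. \<Sum>v\<in>D. \<Sum>y\<in>B. f x y u v)"
    by (intro sum.cong refl) (subst sum.swap, intro sum.cong refl, rule sum.swap)
  also have "\<dots> = (\<Sum>u\<in>C. \<Sum>v\<in>D. \<Sum>x\<in>A. \<Sum>y\<in>B. f x y u v)"
    by (subst sum.swap, intro sum.cong refl, rule sum.swap)
  finally show ?thesis .
qed

lemma adj_mult_scale:
  "adj_mult k (\<lambda>r c. s * L r c) (\<lambda>r c. t * M r c) a b = cnj s * t * adj_mult k L M a b"
  unfolding adj_mult_def by (simp add: sum_distrib_left algebra_simps)

lemma adj_mult_mem_conj_closed_alg_int_subring: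
  assumes "conj_closed_alg_int_subring R"
    and "\<And>r. r < k \<Longrightarrow> L r a \<in> R" and "\<And>r. r < k \<Longrightarrow> M r b \<in> R"
  shows "adj_mult k L M a b \<in> R"
  unfolding adj_mult_def
  by (rule conj_closed_alg_int_subring_sum[OF assms(1)])
     (use assms in \<open>auto simp: conj_closed_alg_int_subring_def\<close>)

lemma trace_tight_frame:
  assumes orth: "\<forall>i<n. orthonormal_cols k m (L i)"
    and frame: "\<forall>r<k. \<forall>s<k. (\<Sum>i<n. \<Sum>c<m. L i r c * cnj (L i s c)) = (if r = s then A else 0)"
  shows "of_nat k * A = of_nat n * of_nat m"
proof -
  have "of_nat k * A = (\<Sum>r<k. \<Sum>i<n. \<Sum>c<m. L i r c * cnj (L i r c))"
    using frame by simp
  also have "\<dots> = (\<Sum>i<n. \<Sum>c<m. adj_mult k (L i) (L i) c c)"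
    unfolding adj_mult_def
    by (subst sum.swap, rule sum.cong[OF refl], subst sum.swap) (simp add: mult.commute)
  also have "\<dots> = (\<Sum>i<n. \<Sum>c<m. 1)"
    using orth by (intro sum.cong refl) (simp add: orthonormal_cols_def)
  finally show ?thesis by simp
qed

lemma frame_operator_sandwich:
  fixes L :: "nat \<Rightarrow> nat \<Rightarrow> nat \<Rightarrow> complex"
  assumes frame: "\<forall>r<k. \<forall>s<k. (\<Sum>i<n. \<Sum>c<m. L i r c * cnj (L i s c)) = (if r = s then A else 0)"
  shows "(\<Sum>j<n. \<Sum>c<m. adj_mult k (L i) (L j) a c * adj_mult k (L j) (L i) c b)
     = A * adj_mult k (L i) (L i) a b"
proof -
  have "(\<Sum>j<n. \<Sum>c<m. adj_mult k (L i) (L j) a c * adj_mult k (L j) (L i) c b)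
    = (\<Sum>j<n. \<Sum>c<m. \<Sum>r<k. \<Sum>s<k. cnj (L i r a) * L i s b * (L j r c * cnj (L j s c)))"
    unfolding adj_mult_def sum_product by (intro sum.cong refl) (simp add: algebra_simps)
  also have "\<dots> = (\<Sum>r<k. \<Sum>s<k. cnj (L i r a) * L i s b * (\<Sum>j<n. \<Sum>c<m. L j r c * cnj (L j s c)))"
    unfolding sum_distrib_left by (rule sum_swap_outer_pair)
  also have "\<dots> = (\<Sum>r<k. \<Sum>s<k. cnj (L i r a) * L i s b * (if r = s then A else 0))"
    using frame by (intro sum.cong refl) simp
  also have "\<dots> = (\<Sum>r<k. cnj (L i r a) * L i r b * A)"
    by (simp add: if_distrib sum.delta cong: if_cong)
  also have "\<dots> = A * adj_mult k (L i) (L i) a b"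
    unfolding adj_mult_def by (simp add: sum_distrib_left algebra_simps)
  finally show ?thesis .
qed

lemma tight_frame_bound_eq_equiisoclinic:
  assumes orth: "\<forall>i<n. orthonormal_cols k m (L i)"
    and frame: "\<forall>r<k. \<forall>s<k. (\<Sum>i<n. \<Sum>c<m. L i r c * cnj (L i s c)) = (if r = s then A else 0)"
    and iso: "\<forall>i<n. \<forall>j<n. i \<noteq> j \<longrightarrow> (\<forall>a<m. \<forall>b<m.
        (\<Sum>c<m. adj_mult k (L i) (L j) a c * adj_mult k (L j) (L i) c b) = (if a = b then \<alpha> else 0))"
    and "i < n" and "a < m"
  shows "A = 1 + of_nat (n - 1) * \<alpha>"
proof -
  have orth_i: "adj_mult k (L i) (L i) a' b' = (if a' = b' then 1 else 0)" if "a' < m" "b' < m" for a' b'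
    using orth \<open>i < n\<close> that by (simp add: orthonormal_cols_def)
  have "A = (\<Sum>j<n. \<Sum>c<m. adj_mult k (L i) (L j) a c * adj_mult k (L j) (L i) c a)"
    using frame_operator_sandwich[OF frame] orth_i \<open>a < m\<close> by simp
  also have "\<dots> = (\<Sum>c<m. adj_mult k (L i) (L i) a c * adj_mult k (L i) (L i) c a)
      + (\<Sum>j\<in>{..<n} - {i}. \<Sum>c<m. adj_mult k (L i) (L j) a c * adj_mult k (L j) (L i) c a)"
    using \<open>i < n\<close> by (simp add: sum.remove)
  also have "(\<Sum>c<m. adj_mult k (L i) (L i) a c * adj_mult k (L i) (L i) c a)
      = (\<Sum>c<m. if c = a then 1 else 0)"
    using orth_i \<open>a < m\<close> by (intro sum.cong refl) auto
  also have "\<dots> = 1"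
    using \<open>a < m\<close> by simp
  also have "(\<Sum>j\<in>{..<n} - {i}. \<Sum>c<m. adj_mult k (L i) (L j) a c * adj_mult k (L j) (L i) c a)
      = (\<Sum>j\<in>{..<n} - {i}. \<alpha>)"
    using iso \<open>i < n\<close> \<open>a < m\<close> by (intro sum.cong refl) auto
  finally show ?thesis using \<open>i < n\<close> by simp
qed

lemma scaled_isoclinic_constant_mem:
  fixes L :: "nat \<Rightarrow> nat \<Rightarrow> nat \<Rightarrow> complex"
  assumes R: "conj_closed_alg_int_subring R"
    and entries: "\<forall>i<n. \<forall>r<k. \<forall>c<m. complex_of_real (sqrt (real k)) * L i r c \<in> R"
    and iso: "\<forall>i<n. \<forall>j<n. i \<noteq> j \<longrightarrow> (\<forall>a<m. \<forall>b<m.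
        (\<Sum>c<m. adj_mult k (L i) (L j) a c * adj_mult k (L j) (L i) c b) = (if a = b then \<alpha> else 0))"
    and "n \<ge> 2" and "m \<ge> 1"
  shows "of_nat k * of_nat k * \<alpha> \<in> R"
proof -
  define M where "M i r c = complex_of_real (sqrt (real k)) * L i r c" for i r c
  have M_entry: "adj_mult k (M i) (M j) a b = of_nat k * adj_mult k (L i) (L j) a b" for i j a b
    unfolding M_def adj_mult_scale by (simp flip: of_real_mult)
  have M_mem: "adj_mult k (M i) (M j) a b \<in> R" if "i < n" "j < n" "a < m" "b < m" for i j a b
    using adj_mult_mem_conj_closed_alg_int_subring[OF R] entries that by (simp add: M_def)
  have "(\<Sum>c<m. adj_mult k (M 0) (M 1) 0 c * adj_mult k (M 1) (M 0) c 0) \<in> R"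
    using M_mem R \<open>n \<ge> 2\<close> \<open>m \<ge> 1\<close>
    by (intro conj_closed_alg_int_subring_sum) (auto simp: conj_closed_alg_int_subring_def)
  also have "(\<Sum>c<m. adj_mult k (M 0) (M 1) 0 c * adj_mult k (M 1) (M 0) c 0)
      = of_nat k * of_nat k * (\<Sum>c<m. adj_mult k (L 0) (L 1) 0 c * adj_mult k (L 1) (L 0) c 0)"
    unfolding M_entry by (simp add: sum_distrib_left algebra_simps)
  finally show ?thesis using iso \<open>n \<ge> 2\<close> \<open>m \<ge> 1\<close> by simp
qed

lemma equiisoclinic_tight_frame_constants:
  fixes A \<alpha> :: real
  assumes orth: "\<forall>i<n. orthonormal_cols k m (L i)"
    and frame: "\<forall>r<k. \<forall>s<k. (\<Sum>i<n. \<Sum>c<m. L i r c * cnj (L i s c))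
      = (if r = s then complex_of_real A else 0)"
    and iso: "\<forall>i<n. \<forall>j<n. i \<noteq> j \<longrightarrow> (\<forall>a<m. \<forall>b<m.
        (\<Sum>c<m. adj_mult k (L i) (L j) a c * adj_mult k (L j) (L i) c b)
          = (if a = b then complex_of_real \<alpha> else 0))"
    and "A > 0" and "n \<ge> 2" and "k \<ge> 1"
  shows "m \<ge> 1"
    and "real k * (real m * real n - real k) / (real n - 1) = real k * real k * \<alpha>"
proof -
  have "complex_of_real (real k * A) = complex_of_real (real n * real m)"
    using trace_tight_frame[OF orth frame] by simp
  then have kA: "real k * A = real n * real m" by (simp only: of_real_eq_iff)
  with \<open>A > 0\<close> \<open>k \<ge> 1\<close> show "m \<ge> 1" by (cases m) auto
  have "complex_of_real A = complex_of_real (1 + real (n - 1) * \<alpha>)"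
    using tight_frame_bound_eq_equiisoclinic[OF orth frame iso, of 0 0] \<open>n \<ge> 2\<close> \<open>m \<ge> 1\<close> by simp
  then have A: "A = 1 + (real n - 1) * \<alpha>" using \<open>n \<ge> 2\<close> by (simp only: of_real_eq_iff) simp
  have "real k * real k * \<alpha> * (real n - 1) = real k * (real k * A - real k)"
    by (simp add: A algebra_simps)
  also have "\<dots> = real k * (real m * real n - real k)"
    using kA by (simp add: algebra_simps)
  finally show "real k * (real m * real n - real k) / (real n - 1) = real k * real k * \<alpha>"
    using \<open>n \<ge> 2\<close> by (simp add: field_simps)
qed

theorem mainTheorem4:
  fixes R :: "complex set" and n k m :: nat and L :: "nat \<Rightarrow> nat \<Rightarrow> nat \<Rightarrow> complex"
  assumes "conj_closed_alg_int_subring R"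
    and "\<forall>i<n. orthonormal_cols k m (L i)"
    and "tight_fusion_frame n k m L"
    and "equiisoclinic n k m L"
    and "\<forall>i<n. \<forall>r<k. \<forall>c<m. complex_of_real (sqrt (real k)) * L i r c \<in> R"
  shows "real k * (real m * real n - real k) / (real n - 1) \<in> \<int>"
proof (cases "n \<ge> 2 \<and> k \<ge> 1")
  case False
  then consider "n = 0" | "n = 1" | "k = 0" by linarith
  then show ?thesis
    by cases (simp_all flip: of_nat_mult)
next
  case True
  then have "n \<ge> 2" "k \<ge> 1" by simp_all
  obtain A :: real where "A > 0" and frame: "\<forall>r<k. \<forall>s<k.
      (\<Sum>i<n. \<Sum>c<m. L i r c * cnj (L i s c)) = (if r = s then complex_of_real A else 0)"
    using assms(3) unfolding tight_fusion_frame_def by blast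
  obtain \<alpha> :: real where iso: "\<forall>i<n. \<forall>j<n. i \<noteq> j \<longrightarrow> (\<forall>a<m. \<forall>b<m.
      (\<Sum>c<m. adj_mult k (L i) (L j) a c * adj_mult k (L j) (L i) c b)
        = (if a = b then complex_of_real \<alpha> else 0))"
    using assms(4) unfolding equiisoclinic_def by blast
  note constants = equiisoclinic_tight_frame_constants[OF assms(2) frame iso \<open>A > 0\<close> \<open>n \<ge> 2\<close> \<open>k \<ge> 1\<close>]
  have "complex_of_real (real k * real k * \<alpha>) \<in> R"
    using scaled_isoclinic_constant_mem[OF assms(1) assms(5) iso] constants(1) \<open>n \<ge> 2\<close> by simp
  then have "algebraic_int (complex_of_real (real k * real k * \<alpha>))"
    using assms(1) by (auto simp: conj_closed_alg_int_subring_def)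
  then have "algebraic_int (real k * real k * \<alpha>)"
    by (simp only: algebraic_int_of_real_iff)
  moreover have "real k * real k * \<alpha> \<in> \<rat>"
    unfolding constants(2)[symmetric] by simp
  ultimately show ?thesis
    using constants(2) rational_algebraic_int_is_int by simp
qed

end
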